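(* Let $\mathbb X$ be an $L$-structure with $|X|=\kappa\ge\omega$. The following are equivalent: (a) $\mathbb X$ is not reversible; (b) there exists a $\kappa$-closed back and forth system $\Pi\subseteq\mathrm{PC}(\mathbb X)$ containing a bad condensation. Moreover, if $\kappa=\omega$, these are also equivalent to: (c) there exists a back and forth system $\Pi\subseteq\mathrm{PC}(\mathbb X)$ containing a bad condensation.
   Context: $L=\langle R_i:i\in I\rangle$ is a relational language, $R_i$ of arity $n_i$; for an $L$-structure $\mathbb X$ with domain $X$, $R_i^{\mathbb X}$ is the interpretation of $R_i$. For a map $f$ and tuple $\bar x=\langle x_0,\dots,x_{k-1}\rangle$ write $f\bar x=\langle f(x_0),\dots,f(x_{k-1})\rangle$. A partial condensation from $\mathbb X$ to $\mathbb Y$ is a bijection $f$ from a set $\operatorname{dom}f\subseteq X$ onto a set $\operatorname{ran}f\subseteq Y$ such that for all $i\in I$ and $\bar x\in(\operatorname{dom}f)^{n_i}$, $\bar x\in R_i^{\mathbb X}$ implies $f\bar x\in R_i^{\mathbb Y}$; $\mathrm{PC}(\mathbb X,\mathbb Y)$ is the set of these and $\mathrm{PC}(\mathbb X)=\mathrm{PC}(\mathbb X,\mathbb X)$. A condensation is a partial condensation with domain $X$ and range $Y$. $\mathbb X$ is reversible iff every condensation from $\mathbb X$ onto $\mathbb X$ is an automorphism of $\mathbb X$. A finite $f\in\mathrm{PC}(\mathbb X)$ is bad iff there is no automorphism $F$ of $\mathbb X$ with $f\subseteq F$. A back and forth system (b.f.s.) is a nonempty $\Pi\subseteq\mathrm{PC}(\mathbb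 X,\mathbb Y)$ such that (e1) for all $f\in\Pi$ and $x\in X$ there is $g\in\Pi$ with $f\subseteq g$ and $x\in\operatorname{dom}g$, and (e2) for all $f\in\Pi$ and $y\in Y$ there is $g\in\Pi$ with $f\subseteq g$ and $y\in\operatorname{ran}g$. A partial order $\langle P,\le\rangle$ is $\kappa$-closed if for every ordinal $\gamma<\kappa$ and every sequence $\langle p_\alpha:\alpha<\gamma\rangle$ in $P$ with $p_\beta\le p_\alpha$ whenever $\alpha<\beta<\gamma$, there is $p\in P$ with $p\le p_\alpha$ for all $\alpha<\gamma$. A b.f.s. $\Pi$ is $\kappa$-closed if $\langle\Pi,\supseteq\rangle$ is $\kappa$-closed. *)

theory Defs
  imports Main "HOL-Library.Countable_Set"
begin

text \<open>A relational language is given by an index set I and an arity function ar.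
  An L-structure is given by a domain X and interpretations R i, a set of
  tuples (lists) of length ar i with entries in X.\<close>

definition is_structure :: "'i set \<Rightarrow> ('i \<Rightarrow> nat) \<Rightarrow> 'a set \<Rightarrow> ('i \<Rightarrow> 'a list set) \<Rightarrow> bool" where
  "is_structure I ar X R \<longleftrightarrow>
     (\<forall>i\<in>I. \<forall>xs\<in>R i. length xs = ar i \<and> set xs \<subseteq> X)"

text \<open>Partial maps are Isabelle maps ('a \<rightharpoonup> 'b); f \<subseteq> g is map_le.\<close>

definition partial_condensation ::
  "'i set \<Rightarrow> ('i \<Rightarrow> nat) \<Rightarrow> 'a set \<Rightarrow> ('i \<Rightarrow> 'a list set) \<Rightarrow>
   'b set \<Rightarrow> ('i \<Rightarrow> 'b list set) \<Rightarrow> ('a \<rightharpoonup> 'b) \<Rightarrow> bool" where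
  "partial_condensation I ar X RX Y RY f \<longleftrightarrow>
     dom f \<subseteq> X \<and> ran f \<subseteq> Y \<and> inj_on (the \<circ> f) (dom f) \<and>
     (\<forall>i\<in>I. \<forall>xs. length xs = ar i \<and> set xs \<subseteq> dom f \<and> xs \<in> RX i
        \<longrightarrow> map (the \<circ> f) xs \<in> RY i)"

definition PC :: "'i set \<Rightarrow> ('i \<Rightarrow> nat) \<Rightarrow> 'a set \<Rightarrow> ('i \<Rightarrow> 'a list set) \<Rightarrow>
   'b set \<Rightarrow> ('i \<Rightarrow> 'b list set) \<Rightarrow> ('a \<rightharpoonup> 'b) set" where
  "PC I ar X RX Y RY = {f. partial_condensation I ar X RX Y RY f}"

definition condensation ::
  "'i set \<Rightarrow> ('i \<Rightarrow> nat) \<Rightarrow> 'a set \<Rightarrow> ('i \<Rightarrow> 'a list set) \<Rightarrow>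
   'b set \<Rightarrow> ('i \<Rightarrow> 'b list set) \<Rightarrow> ('a \<rightharpoonup> 'b) \<Rightarrow> bool" where
  "condensation I ar X RX Y RY f \<longleftrightarrow>
     partial_condensation I ar X RX Y RY f \<and> dom f = X \<and> ran f = Y"

definition automorphism ::
  "'i set \<Rightarrow> ('i \<Rightarrow> nat) \<Rightarrow> 'a set \<Rightarrow> ('i \<Rightarrow> 'a list set) \<Rightarrow> ('a \<rightharpoonup> 'a) \<Rightarrow> bool" where
  "automorphism I ar X R F \<longleftrightarrow>
     dom F = X \<and> ran F = X \<and> inj_on (the \<circ> F) X \<and>
     (\<forall>i\<in>I. \<forall>xs. length xs = ar i \<and> set xs \<subseteq> X \<longrightarrow>
        (xs \<in> R i \<longleftrightarrow> map (the \<circ> F) xs \<in> R i))"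

definition reversible :: "'i set \<Rightarrow> ('i \<Rightarrow> nat) \<Rightarrow> 'a set \<Rightarrow> ('i \<Rightarrow> 'a list set) \<Rightarrow> bool" where
  "reversible I ar X R \<longleftrightarrow>
     (\<forall>f. condensation I ar X R X R f \<longrightarrow> automorphism I ar X R f)"

definition bad :: "'i set \<Rightarrow> ('i \<Rightarrow> nat) \<Rightarrow> 'a set \<Rightarrow> ('i \<Rightarrow> 'a list set) \<Rightarrow> ('a \<rightharpoonup> 'a) \<Rightarrow> bool" where
  "bad I ar X R f \<longleftrightarrow>
     f \<in> PC I ar X R X R \<and> finite (dom f) \<and>
     \<not> (\<exists>F. automorphism I ar X R F \<and> f \<subseteq>\<^sub>m F)"

definition back_and_forth ::
  "'i set \<Rightarrow> ('i \<Rightarrow> nat) \<Rightarrow> 'a set \<Rightarrow> ('i \<Rightarrow> 'a list set) \<Rightarrow>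
   'b set \<Rightarrow> ('i \<Rightarrow> 'b list set) \<Rightarrow> ('a \<rightharpoonup> 'b) set \<Rightarrow> bool" where
  "back_and_forth I ar X RX Y RY \<Pi> \<longleftrightarrow>
     \<Pi> \<noteq> {} \<and> \<Pi> \<subseteq> PC I ar X RX Y RY \<and>
     (\<forall>f\<in>\<Pi>. \<forall>x\<in>X. \<exists>g\<in>\<Pi>. f \<subseteq>\<^sub>m g \<and> x \<in> dom g) \<and>
     (\<forall>f\<in>\<Pi>. \<forall>y\<in>Y. \<exists>g\<in>\<Pi>. f \<subseteq>\<^sub>m g \<and> y \<in> ran g)"

text \<open>kappa-closedness of a partial order (P, le), where the cardinal kappa is given
  by a cardinal order relation k (e.g. card_of X), and ordinals gamma < kappa are
  represented by well-orders r on the same carrier type with r <o k.\<close>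

definition kappa_closed :: "'c rel \<Rightarrow> 'd set \<Rightarrow> ('d \<Rightarrow> 'd \<Rightarrow> bool) \<Rightarrow> bool" where
  "kappa_closed k P le \<longleftrightarrow>
     (\<forall>(r :: 'c rel) (p :: 'c \<Rightarrow> 'd).
        Well_order r \<and> (r, k) \<in> BNF_Wellorder_Constructions.ordLess \<and>
        (\<forall>\<alpha>\<in>Field r. p \<alpha> \<in> P) \<and>
        (\<forall>\<alpha>\<in>Field r. \<forall>\<beta>\<in>Field r. (\<alpha>, \<beta>) \<in> r \<and> \<alpha> \<noteq> \<beta> \<longrightarrow> le (p \<beta>) (p \<alpha>))
        \<longrightarrow> (\<exists>q\<in>P. \<forall>\<alpha>\<in>Field r. le q (p \<alpha>)))"

definition bfs_kappa_closed :: "'c rel \<Rightarrow> ('a \<rightharpoonup> 'b) set \<Rightarrow> bool" where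
  "bfs_kappa_closed k \<Pi> \<longleftrightarrow> kappa_closed k \<Pi> (\<lambda>g f. f \<subseteq>\<^sub>m g)"

end

theory Submission
  imports Defs
begin

text \<open>
  If \<open>\<Pi>\<close> is a \<open>\<kappa>\<close>-closed b.f.s. containing a bad \<open>f\<close>, build a chain in \<open>\<Pi>\<close> above \<open>f\<close> along a
  well-order of \<open>X\<close> of type \<open>\<kappa>\<close>: at stage \<open>x\<close> take an upper bound in \<open>\<Pi>\<close> of the earlier stages
  (they form a sequence of length \<open>< \<kappa>\<close>) and extend it so that \<open>x\<close> lies in its domain and its range.
  The union of the chain is a condensation extending \<open>f\<close>, which is no automorphism because \<open>f\<close>
  is bad. Conversely, a condensation \<open>f\<close> that is not an automorphism fails to reflect some tuple
  \<open>xs\<close>; then \<open>f |` set xs\<close> is bad, and \<open>{f |` set xs, f}\<close> is a b.f.s. that is closed for every \<open>\<kappa>\<close>,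
  since \<open>f\<close> is its greatest element. For countable \<open>X\<close> every sequence of length \<open>< \<omega>\<close> is finite and
  so has a greatest element: every b.f.s. is \<open>\<omega>\<close>-closed. Neither the arities nor the infinity of
  \<open>X\<close> play a role.
\<close>

lemma map_le_ran: "f \<subseteq>\<^sub>m g \<Longrightarrow> ran f \<subseteq> ran g"
  by (force simp: map_le_def ran_def)

lemma finite_map_chain_has_greatest:
  assumes "Complete_Partial_Order.chain (\<subseteq>\<^sub>m) C" and "finite C" and "C \<noteq> {}"
  shows "\<exists>g\<in>C. \<forall>f\<in>C. f \<subseteq>\<^sub>m g"
  using assms(2,3,1)
proof (induction C rule: finite_ne_induct)
  case (singleton f)
  then show ?case by (simp add: map_le_refl)
next
  case (insert f C)
  then obtain g where g: "g \<in> C" "\<forall>h\<in>C. h \<subseteq>\<^sub>m g"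
    by (meson chain_subset subset_insertI)
  from insert.prems g(1) have "f \<subseteq>\<^sub>m g \<or> g \<subseteq>\<^sub>m f"
    by (auto simp: chain_def)
  then show ?case
    using g map_le_trans by (metis insert_iff map_le_refl)
qed

definition map_Union :: "('a \<rightharpoonup> 'b) set \<Rightarrow> 'a \<rightharpoonup> 'b" where
  "map_Union C a = (if \<exists>g\<in>C. a \<in> dom g then (SOME g. g \<in> C \<and> a \<in> dom g) a else None)"

lemma map_Union_eq:
  assumes "Complete_Partial_Order.chain (\<subseteq>\<^sub>m) C" and "g \<in> C" and "a \<in> dom g"
  shows "map_Union C a = g a"
proof -
  define g' where "g' = (SOME g. g \<in> C \<and> a \<in> dom g)"
  have g': "g' \<in> C" "a \<in> dom g'"
    using someI[of "\<lambda>g. g \<in> C \<and> a \<in> dom g"] assms(2,3) unfolding g'_def by blast+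
  have "g \<subseteq>\<^sub>m g' \<or> g' \<subseteq>\<^sub>m g"
    using chainD[OF assms(1) assms(2) g'(1)] .
  then have "g' a = g a"
    using assms(3) g'(2) unfolding map_le_def by metis
  then show ?thesis
    using assms(2,3) by (auto simp: map_Union_def g'_def)
qed

lemma map_le_map_Union:
  "Complete_Partial_Order.chain (\<subseteq>\<^sub>m) C \<Longrightarrow> g \<in> C \<Longrightarrow> g \<subseteq>\<^sub>m map_Union C"
  by (simp add: map_le_def map_Union_eq)

lemma dom_map_Union: "dom (map_Union C) = (\<Union>g\<in>C. dom g)"
proof (intro set_eqI iffI)
  fix a
  assume "a \<in> dom (map_Union C)"
  then show "a \<in> (\<Union>g\<in>C. dom g)"
    by (auto simp: map_Union_def split: if_splits)
next
  fix a
  assume "a \<in> (\<Union>g\<in>C. dom g)"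
  then have "\<exists>g. g \<in> C \<and> a \<in> dom g" by blast
  then have "a \<in> dom (SOME g. g \<in> C \<and> a \<in> dom g)"
    by (rule someI2_ex) blast
  moreover have "map_Union C a = (SOME g. g \<in> C \<and> a \<in> dom g) a"
    using \<open>a \<in> (\<Union>g\<in>C. dom g)\<close> unfolding map_Union_def by (intro if_P) blast
  ultimately show "a \<in> dom (map_Union C)"
    by (metis domIff)
qed

lemma ran_map_Union:
  assumes "Complete_Partial_Order.chain (\<subseteq>\<^sub>m) C"
  shows "ran (map_Union C) = (\<Union>g\<in>C. ran g)"
proof
  show "ran (map_Union C) \<subseteq> (\<Union>g\<in>C. ran g)"
  proof
    fix b assume "b \<in> ran (map_Union C)"
    then obtain a where a: "map_Union C a = Some b" by (auto simp: ran_def)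
    obtain g where g: "g \<in> C" "a \<in> dom g"
      using domI[of "map_Union C", OF a] unfolding dom_map_Union by blast
    then have "g a = Some b"
      using a map_Union_eq[OF assms] by simp
    then show "b \<in> (\<Union>g\<in>C. ran g)"
      using g(1) by (auto intro: ranI)
  qed
  show "(\<Union>g\<in>C. ran g) \<subseteq> ran (map_Union C)"
    using map_le_ran[OF map_le_map_Union[OF assms]] by blast
qed

lemma finite_subset_dom_map_Union:
  assumes chain: "Complete_Partial_Order.chain (\<subseteq>\<^sub>m) C" and "C \<noteq> {}"
    and "finite S" and "S \<subseteq> dom (map_Union C)"
  shows "\<exists>g\<in>C. S \<subseteq> dom g"
proof -
  have "\<forall>a\<in>S. \<exists>g. g \<in> C \<and> a \<in> dom g"
    using assms(4) unfolding dom_map_Union by blast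
  from bchoice[OF this] obtain pick where pick: "\<forall>a\<in>S. pick a \<in> C \<and> a \<in> dom (pick a)"
    by blast
  obtain g0 where "g0 \<in> C"
    using \<open>C \<noteq> {}\<close> by blast
  let ?D = "insert g0 (pick ` S)"
  have "?D \<subseteq> C"
    using \<open>g0 \<in> C\<close> pick by auto
  moreover have "finite ?D"
    using \<open>finite S\<close> by simp
  ultimately obtain g where g: "g \<in> ?D" "\<forall>f\<in>?D. f \<subseteq>\<^sub>m g"
    using finite_map_chain_has_greatest[OF chain_subset[OF chain]] by blast
  have "S \<subseteq> dom g"
  proof
    fix a
    assume "a \<in> S"
    then have "pick a \<subseteq>\<^sub>m g"
      using g(2) by blast
    then show "a \<in> dom g"
      using map_le_implies_dom_le pick \<open>a \<in> S\<close> by fast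
  qed
  then show ?thesis
    using g(1) \<open>?D \<subseteq> C\<close> by blast
qed

lemma partial_condensation_map_Union:
  assumes chain: "Complete_Partial_Order.chain (\<subseteq>\<^sub>m) C" and "C \<noteq> {}"
    and pc: "\<And>g. g \<in> C \<Longrightarrow> partial_condensation I ar X RX Y RY g"
  shows "partial_condensation I ar X RX Y RY (map_Union C)"
  unfolding partial_condensation_def
proof (intro conjI ballI allI impI)
  have eq: "map (the \<circ> map_Union C) xs = map (the \<circ> g) xs" if "g \<in> C" "set xs \<subseteq> dom g" for g xs
    using map_Union_eq[OF chain that(1)] that(2) by (simp add: subset_iff)
  show "dom (map_Union C) \<subseteq> X"
    unfolding dom_map_Union using pc unfolding partial_condensation_def by blast
  show "ran (map_Union C) \<subseteq> Y"
    unfolding ran_map_Union[OF chain] using pc unfolding partial_condensation_def by blast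
  show "inj_on (the \<circ> map_Union C) (dom (map_Union C))"
  proof (rule inj_onI)
    fix a b
    assume ab: "a \<in> dom (map_Union C)" "b \<in> dom (map_Union C)"
      and eq_ab: "(the \<circ> map_Union C) a = (the \<circ> map_Union C) b"
    obtain g where g: "g \<in> C" "{a, b} \<subseteq> dom g"
      using finite_subset_dom_map_Union[OF chain \<open>C \<noteq> {}\<close>, of "{a, b}"] ab by auto
    then have "(the \<circ> g) a = (the \<circ> g) b"
      using eq_ab map_Union_eq[OF chain g(1)] by simp
    then show "a = b"
      using pc[OF g(1)] g(2) unfolding partial_condensation_def by (meson inj_onD insert_subset)
  qed
  fix i xs
  assume "i \<in> I" and xs: "length xs = ar i \<and> set xs \<subseteq> dom (map_Union C) \<and> xs \<in> RX i"
  then obtain g where g: "g \<in> C" "set xs \<subseteq> dom g"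
    using finite_subset_dom_map_Union[OF chain \<open>C \<noteq> {}\<close>] by blast
  then have "map (the \<circ> g) xs \<in> RY i"
    using pc \<open>i \<in> I\<close> xs unfolding partial_condensation_def by blast
  then show "map (the \<circ> map_Union C) xs \<in> RY i"
    unfolding eq[OF g] .
qed

lemma partial_condensation_map_le:
  assumes pc: "partial_condensation I ar X RX Y RY f" and le: "g \<subseteq>\<^sub>m f"
  shows "partial_condensation I ar X RX Y RY g"
proof -
  have dom: "dom g \<subseteq> dom f"
    using map_le_implies_dom_le[OF le] .
  have eq: "map (the \<circ> g) xs = map (the \<circ> f) xs" if "set xs \<subseteq> dom g" for xs
    using that le by (auto simp: map_le_def subset_iff)
  have "inj_on (the \<circ> f) (dom g)"
    using pc dom inj_on_subset unfolding partial_condensation_def by blast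
  then have "inj_on (the \<circ> g) (dom g)"
    using eq[of "[_]"] by (simp add: inj_on_def)
  moreover have "map (the \<circ> g) xs \<in> RY i"
    if "i \<in> I" "length xs = ar i" "set xs \<subseteq> dom g" "xs \<in> RX i" for i xs
  proof -
    have "map (the \<circ> f) xs \<in> RY i"
      using pc dom that unfolding partial_condensation_def by blast
    then show ?thesis
      using eq that(3) by metis
  qed
  ultimately show ?thesis
    using pc dom map_le_ran[OF le] unfolding partial_condensation_def by blast
qed

lemma transfinite_map_chain:
  fixes w :: "'a rel" and P :: "('b \<rightharpoonup> 'c) set"
  assumes wo: "Well_order w" and "f0 \<in> P"
    and ext: "\<And>g x. g \<in> P \<Longrightarrow> x \<in> Field w \<Longrightarrow> \<exists>h\<in>P. g \<subseteq>\<^sub>m h \<and> Q x h"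
    and lim: "\<And>x p. x \<in> Field w \<Longrightarrow> underS w x \<noteq> {} \<Longrightarrow> (\<forall>a\<in>underS w x. p a \<in> P) \<Longrightarrow>
      (\<forall>a\<in>underS w x. \<forall>b\<in>underS w x. (a, b) \<in> w \<longrightarrow> p a \<subseteq>\<^sub>m p b) \<Longrightarrow>
      \<exists>q\<in>P. \<forall>a\<in>underS w x. p a \<subseteq>\<^sub>m q"
  obtains p where "\<And>x. x \<in> Field w \<Longrightarrow> p x \<in> P \<and> f0 \<subseteq>\<^sub>m p x \<and> Q x (p x)"
    and "\<And>a b. (a, b) \<in> w \<Longrightarrow> p a \<subseteq>\<^sub>m p b"
proof -
  define bound where "bound p x =
    (if underS w x = {} then f0 else SOME q. q \<in> P \<and> (\<forall>a\<in>underS w x. p a \<subseteq>\<^sub>m q))" for p x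
  define step where "step p x = (SOME h. h \<in> P \<and> bound p x \<subseteq>\<^sub>m h \<and> Q x h)" for p x
  define p where "p = wfrec (w - Id) step"
  have wf: "wf (w - Id)"
    using wo unfolding well_order_on_def by blast
  have bound_cong: "bound p x = bound p' x" if "\<forall>a\<in>underS w x. p a = p' a" for p p' x
    unfolding bound_def using that by simp
  have p_step: "p x = step p x" for x
  proof -
    have "p x = step (cut p (w - Id) x) x"
      unfolding p_def by (rule wfrec[OF wf])
    also have "\<dots> = step p x"
      unfolding step_def using bound_cong[of x "cut p (w - Id) x" p] by (simp add: cut_def underS_def)
    finally show ?thesis .
  qed
  have inv: "x \<in> Field w \<longrightarrow> p x \<in> P \<and> f0 \<subseteq>\<^sub>m p x \<and> Q x (p x) \<and> (\<forall>a\<in>underS w x. p a \<subseteq>\<^sub>m p x)"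
    for x
    using wf
  proof (induction x rule: wf_induct_rule)
    case (less x)
    show ?case
    proof
      assume x: "x \<in> Field w"
      have IH: "p a \<in> P \<and> f0 \<subseteq>\<^sub>m p a \<and> (\<forall>b\<in>underS w a. p b \<subseteq>\<^sub>m p a)" if "a \<in> underS w x" for a
        using less that by (auto simp: underS_def FieldI1)
      have coherent: "\<forall>a\<in>underS w x. \<forall>b\<in>underS w x. (a, b) \<in> w \<longrightarrow> p a \<subseteq>\<^sub>m p b"
      proof (intro ballI impI)
        fix a b
        assume "a \<in> underS w x" "b \<in> underS w x" "(a, b) \<in> w"
        then show "p a \<subseteq>\<^sub>m p b"
          using IH[of b] by (cases "a = b") (auto simp: underS_def map_le_refl)
      qed
      have bound: "bound p x \<in> P \<and> f0 \<subseteq>\<^sub>m bound p x \<and> (\<forall>a\<in>underS w x. p a \<subseteq>\<^sub>m bound p x)"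
      proof (cases "underS w x = {}")
        case True
        then show ?thesis
          using \<open>f0 \<in> P\<close> by (simp add: bound_def map_le_refl)
      next
        case False
        then obtain a where a: "a \<in> underS w x" by blast
        have "\<exists>q. q \<in> P \<and> (\<forall>a\<in>underS w x. p a \<subseteq>\<^sub>m q)"
          using lim[OF x False _ coherent] IH by blast
        from someI_ex[OF this]
        have "bound p x \<in> P \<and> (\<forall>a\<in>underS w x. p a \<subseteq>\<^sub>m bound p x)"
          using False by (simp add: bound_def)
        then show ?thesis
          using IH[OF a] map_le_trans a by blast
      qed
      have "\<exists>h. h \<in> P \<and> bound p x \<subseteq>\<^sub>m h \<and> Q x h"
        using ext[OF _ x] bound by blast
      then have "step p x \<in> P \<and> bound p x \<subseteq>\<^sub>m step p x \<and> Q x (step p x)"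
        unfolding step_def by (rule someI_ex)
      then show "p x \<in> P \<and> f0 \<subseteq>\<^sub>m p x \<and> Q x (p x) \<and> (\<forall>a\<in>underS w x. p a \<subseteq>\<^sub>m p x)"
        using bound p_step[of x] map_le_trans by metis
    qed
  qed
  have "p a \<subseteq>\<^sub>m p b" if "(a, b) \<in> w" for a b
    using inv[of b] that by (cases "a = b") (auto simp: underS_def map_le_refl FieldI2)
  then show thesis
    using that inv by blast
qed

lemma back_and_forth_extend:
  assumes "back_and_forth I ar X RX Y RY \<Pi>" and "f \<in> \<Pi>" and "x \<in> X" and "y \<in> Y"
  obtains h where "h \<in> \<Pi>" "f \<subseteq>\<^sub>m h" "x \<in> dom h" "y \<in> ran h"
proof -
  obtain g where g: "g \<in> \<Pi>" "f \<subseteq>\<^sub>m g" "x \<in> dom g"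
    using assms unfolding back_and_forth_def by blast
  then obtain h where "h \<in> \<Pi>" "g \<subseteq>\<^sub>m h" "y \<in> ran h"
    using assms unfolding back_and_forth_def by blast
  then show thesis
    using that g map_le_trans map_le_implies_dom_le by blast
qed

lemma bfs_kappa_closed_card_of_underS:
  fixes X :: "'a set"
  assumes closed: "bfs_kappa_closed (card_of X) \<Pi>" and "x \<in> X"
    and "\<forall>a\<in>underS (card_of X) x. p a \<in> \<Pi>"
    and "\<forall>a\<in>underS (card_of X) x. \<forall>b\<in>underS (card_of X) x. (a, b) \<in> card_of X \<longrightarrow> p a \<subseteq>\<^sub>m p b"
  shows "\<exists>q\<in>\<Pi>. \<forall>a\<in>underS (card_of X) x. p a \<subseteq>\<^sub>m q"
proof -
  let ?w = "card_of X"
  let ?r = "Restr ?w (underS ?w x)"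
  have wo: "Well_order ?w"
    by (rule card_of_Well_order)
  have bound: "\<And>(r :: 'a rel) q. Well_order r \<Longrightarrow> (r, ?w) \<in> ordLess \<Longrightarrow> \<forall>\<alpha>\<in>Field r. q \<alpha> \<in> \<Pi> \<Longrightarrow>
      \<forall>\<alpha>\<in>Field r. \<forall>\<beta>\<in>Field r. (\<alpha>, \<beta>) \<in> r \<and> \<alpha> \<noteq> \<beta> \<longrightarrow> q \<alpha> \<subseteq>\<^sub>m q \<beta> \<Longrightarrow>
      \<exists>g\<in>\<Pi>. \<forall>\<alpha>\<in>Field r. q \<alpha> \<subseteq>\<^sub>m g"
    using closed unfolding bfs_kappa_closed_def kappa_closed_def by blast
  have "\<forall>a\<in>X. (Restr ?w (underS ?w a), ?w) \<in> ordLess"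
    using Card_order_iff_Restr_underS[OF wo] card_of_Card_order[of X]
    unfolding Field_card_of by blast
  then have less: "(?r, ?w) \<in> ordLess"
    using \<open>x \<in> X\<close> by blast
  have field: "Field ?r = underS ?w x"
    using Field_Restr_ofilter[OF wo] wo_rel.underS_ofilter[of ?w x] wo by (simp add: wo_rel_def)
  have "\<forall>\<alpha>\<in>Field ?r. p \<alpha> \<in> \<Pi>"
    using assms(3) unfolding field .
  moreover have "\<forall>\<alpha>\<in>Field ?r. \<forall>\<beta>\<in>Field ?r. (\<alpha>, \<beta>) \<in> ?r \<and> \<alpha> \<noteq> \<beta> \<longrightarrow> p \<alpha> \<subseteq>\<^sub>m p \<beta>"
    using assms(4) unfolding field by blast
  ultimately have "\<exists>q\<in>\<Pi>. \<forall>\<alpha>\<in>Field ?r. p \<alpha> \<subseteq>\<^sub>m q"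
    by (rule bound[OF Well_order_Restr[OF wo] less])
  then show ?thesis
    by (simp only: field)
qed

lemma condensation_from_kappa_closed_back_and_forth:
  assumes bfs: "back_and_forth I ar X R X R \<Pi>"
    and closed: "bfs_kappa_closed (card_of X) \<Pi>" and "f0 \<in> \<Pi>"
  obtains F where "condensation I ar X R X R F" and "f0 \<subseteq>\<^sub>m F"
proof -
  let ?w = "card_of X"
  have wo: "Well_order ?w"
    by (rule card_of_Well_order)
  obtain p where p: "\<And>x. x \<in> X \<Longrightarrow> p x \<in> \<Pi> \<and> f0 \<subseteq>\<^sub>m p x \<and> x \<in> dom (p x) \<and> x \<in> ran (p x)"
    and mono: "\<And>a b. (a, b) \<in> ?w \<Longrightarrow> p a \<subseteq>\<^sub>m p b"
  proof (rule transfinite_map_chain[OF wo \<open>f0 \<in> \<Pi>\<close>, of "\<lambda>x h. x \<in> dom h \<and> x \<in> ran h"],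
      unfold Field_card_of)
    show "\<exists>h\<in>\<Pi>. g \<subseteq>\<^sub>m h \<and> x \<in> dom h \<and> x \<in> ran h" if "g \<in> \<Pi>" "x \<in> X" for g x
      using back_and_forth_extend[OF bfs that that(2)] by blast
    show "\<exists>q\<in>\<Pi>. \<forall>a\<in>underS ?w x. p a \<subseteq>\<^sub>m q"
      if "x \<in> X" "\<forall>a\<in>underS ?w x. p a \<in> \<Pi>"
        "\<forall>a\<in>underS ?w x. \<forall>b\<in>underS ?w x. (a, b) \<in> ?w \<longrightarrow> p a \<subseteq>\<^sub>m p b" for x p
      using bfs_kappa_closed_card_of_underS[OF closed that] .
  qed blast
  let ?C = "insert f0 (p ` X)"
  have chain: "Complete_Partial_Order.chain (\<subseteq>\<^sub>m) ?C"
  proof (rule chainI)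
    fix f g
    assume "f \<in> ?C" "g \<in> ?C"
    moreover have "p a \<subseteq>\<^sub>m p b \<or> p b \<subseteq>\<^sub>m p a" if "a \<in> X" "b \<in> X" for a b
    proof -
      have "(a, b) \<in> ?w \<or> (b, a) \<in> ?w"
        using wo_rel.TOTALS[of ?w] wo that by (simp add: wo_rel_def Field_card_of)
      then show ?thesis
        using mono by blast
    qed
    ultimately show "f \<subseteq>\<^sub>m g \<or> g \<subseteq>\<^sub>m f"
      using p by (auto simp: map_le_refl)
  qed
  have pc: "partial_condensation I ar X R X R (map_Union ?C)"
  proof (rule partial_condensation_map_Union[OF chain])
    show "partial_condensation I ar X R X R g" if "g \<in> ?C" for g
      using that p \<open>f0 \<in> \<Pi>\<close> bfs unfolding back_and_forth_def PC_def by blast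
  qed blast
  have "X \<subseteq> dom (map_Union ?C)" "X \<subseteq> ran (map_Union ?C)"
    unfolding dom_map_Union ran_map_Union[OF chain] using p by blast+
  then have "condensation I ar X R X R (map_Union ?C)"
    using pc unfolding condensation_def partial_condensation_def by blast
  then show thesis
    using that map_le_map_Union[OF chain] by blast
qed

lemma not_reversible_if_bad_in_kappa_closed_bfs:
  assumes "back_and_forth I ar X R X R \<Pi>" and "bfs_kappa_closed (card_of X) \<Pi>"
    and "f \<in> \<Pi>" and "bad I ar X R f"
  shows "\<not> reversible I ar X R"
proof
  assume "reversible I ar X R"
  obtain F where "condensation I ar X R X R F" and "f \<subseteq>\<^sub>m F"
    using condensation_from_kappa_closed_back_and_forth assms(1-3) .
  then show False
    using \<open>reversible I ar X R\<close> \<open>bad I ar X R f\<close> unfolding reversible_def bad_def by blast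
qed

lemma bfs_kappa_closed_if_greatest:
  assumes "F \<in> \<Pi>" and "\<forall>f\<in>\<Pi>. f \<subseteq>\<^sub>m F"
  shows "bfs_kappa_closed k \<Pi>"
  using assms unfolding bfs_kappa_closed_def kappa_closed_def by blast

lemma back_and_forth_if_greatest_condensation:
  assumes "condensation I ar X RX Y RY F" and "F \<in> \<Pi>" and "\<Pi> \<subseteq> PC I ar X RX Y RY"
    and "\<forall>f\<in>\<Pi>. f \<subseteq>\<^sub>m F"
  shows "back_and_forth I ar X RX Y RY \<Pi>"
  using assms unfolding back_and_forth_def condensation_def by blast

lemma bad_restriction_of_non_automorphism:
  assumes cond: "condensation I ar X R X R f" and "\<not> automorphism I ar X R f"
  obtains A where "bad I ar X R (f |` A)"
proof -
  have pc: "partial_condensation I ar X R X R f" and "dom f = X" "ran f = X"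
    using cond unfolding condensation_def by auto
  then obtain i xs where i: "i \<in> I" "length xs = ar i" "set xs \<subseteq> X"
    and "(xs \<in> R i) \<noteq> (map (the \<circ> f) xs \<in> R i)"
    using \<open>\<not> automorphism I ar X R f\<close> unfolding automorphism_def partial_condensation_def by auto
  moreover have "xs \<in> R i \<longrightarrow> map (the \<circ> f) xs \<in> R i"
    using pc i \<open>dom f = X\<close> unfolding partial_condensation_def by blast
  ultimately have reflected: "xs \<notin> R i" "map (the \<circ> f) xs \<in> R i"
    by auto
  have "\<not> automorphism I ar X R F" if le: "f |` set xs \<subseteq>\<^sub>m F" for F
  proof -
    have "F a = f a" if "a \<in> set xs" for a
    proof -
      have "a \<in> dom (f |` set xs)"
        using that i(3) \<open>dom f = X\<close> by auto
      then show ?thesis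
        using le that unfolding map_le_def by simp
    qed
    then have map_eq: "map (the \<circ> F) xs = map (the \<circ> f) xs"
      by simp
    show ?thesis
    proof
      assume "automorphism I ar X R F"
      then have "xs \<in> R i \<longleftrightarrow> map (the \<circ> F) xs \<in> R i"
        using i unfolding automorphism_def by blast
      then show False
        using reflected unfolding map_eq by blast
    qed
  qed
  moreover have "f |` set xs \<in> PC I ar X R X R"
    using partial_condensation_map_le[OF pc] unfolding PC_def by (simp add: map_le_def)
  ultimately have "bad I ar X R (f |` set xs)"
    unfolding bad_def by auto
  then show thesis
    by (rule that)
qed

lemma not_reversible_imp_kappa_closed_bfs:
  assumes "\<not> reversible I ar X R"
  shows "\<exists>\<Pi>. back_and_forth I ar X R X R \<Pi> \<and> (\<forall>k. bfs_kappa_closed k \<Pi>) \<and> (\<exists>f\<in>\<Pi>. bad I ar X R f)"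
proof -
  obtain f where cond: "condensation I ar X R X R f" and "\<not> automorphism I ar X R f"
    using assms unfolding reversible_def by blast
  then obtain A where bad: "bad I ar X R (f |` A)"
    by (rule bad_restriction_of_non_automorphism)
  let ?\<Pi> = "{f |` A, f}"
  have le: "\<forall>g\<in>?\<Pi>. g \<subseteq>\<^sub>m f"
    by (auto simp: map_le_def)
  have "?\<Pi> \<subseteq> PC I ar X R X R"
    using cond bad unfolding condensation_def bad_def PC_def by blast
  then have "back_and_forth I ar X R X R ?\<Pi>"
    using back_and_forth_if_greatest_condensation[OF cond _ _ le] by simp
  then show ?thesis
    using bfs_kappa_closed_if_greatest[of f ?\<Pi>] le bad by blast
qed

lemma bfs_kappa_closed_card_of_countable:
  fixes X :: "'a set"
  assumes "countable X" and "\<Pi> \<noteq> {}"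
  shows "bfs_kappa_closed (card_of X) \<Pi>"
  unfolding bfs_kappa_closed_def kappa_closed_def
proof (intro allI impI)
  fix r :: "'a rel" and p
  assume r: "Well_order r \<and> (r, card_of X) \<in> ordLess \<and> (\<forall>\<alpha>\<in>Field r. p \<alpha> \<in> \<Pi>) \<and>
    (\<forall>\<alpha>\<in>Field r. \<forall>\<beta>\<in>Field r. (\<alpha>, \<beta>) \<in> r \<and> \<alpha> \<noteq> \<beta> \<longrightarrow> p \<alpha> \<subseteq>\<^sub>m p \<beta>)"
  have "(card_of X, card_of (UNIV :: nat set)) \<in> ordLeq"
    using \<open>countable X\<close> countableE card_of_ordLeq by blast
  then have "(card_of (Field r), natLeq) \<in> ordLess"
    using r ordLess_Field card_of_nat ordLess_ordLeq_trans ordLeq_ordIso_trans by blast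
  then have "finite (p ` Field r)"
    using finite_iff_ordLess_natLeq by blast
  moreover have "Complete_Partial_Order.chain (\<subseteq>\<^sub>m) (p ` Field r)"
  proof (rule chainI)
    fix f g
    assume "f \<in> p ` Field r" "g \<in> p ` Field r"
    then obtain \<alpha> \<beta> where "\<alpha> \<in> Field r" "\<beta> \<in> Field r" "f = p \<alpha>" "g = p \<beta>"
      by blast
    then have "(\<alpha>, \<beta>) \<in> r \<or> (\<beta>, \<alpha>) \<in> r"
      using wo_rel.TOTALS[of r] r by (simp add: wo_rel_def)
    then show "f \<subseteq>\<^sub>m g \<or> g \<subseteq>\<^sub>m f"
      using r \<open>\<alpha> \<in> Field r\<close> \<open>\<beta> \<in> Field r\<close> \<open>f = p \<alpha>\<close> \<open>g = p \<beta>\<close> by (metis map_le_refl)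
  qed
  ultimately show "\<exists>q\<in>\<Pi>. \<forall>\<alpha>\<in>Field r. p \<alpha> \<subseteq>\<^sub>m q"
    using finite_map_chain_has_greatest[of "p ` Field r"] r \<open>\<Pi> \<noteq> {}\<close> by (cases "Field r = {}") auto
qed

theorem theorem3p4:
  fixes I :: "'i set" and ar :: "'i \<Rightarrow> nat" and X :: "'a set" and R :: "'i \<Rightarrow> 'a list set"
  assumes "is_structure I ar X R"
    and "infinite X"
  shows "(\<not> reversible I ar X R \<longleftrightarrow>
           (\<exists>\<Pi>. back_and_forth I ar X R X R \<Pi> \<and>
                 bfs_kappa_closed (BNF_Cardinal_Order_Relation.card_of X) \<Pi> \<and>
                 (\<exists>f\<in>\<Pi>. bad I ar X R f)))
       \<and> (countable X \<longrightarrow>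
           (\<not> reversible I ar X R \<longleftrightarrow>
             (\<exists>\<Pi>. back_and_forth I ar X R X R \<Pi> \<and> (\<exists>f\<in>\<Pi>. bad I ar X R f))))"
proof -
  have closed_iff: "\<not> reversible I ar X R \<longleftrightarrow>
      (\<exists>\<Pi>. back_and_forth I ar X R X R \<Pi> \<and> bfs_kappa_closed (card_of X) \<Pi> \<and> (\<exists>f\<in>\<Pi>. bad I ar X R f))"
  proof
    assume "\<not> reversible I ar X R"
    then obtain \<Pi> where "back_and_forth I ar X R X R \<Pi>" "\<forall>k :: 'a rel. bfs_kappa_closed k \<Pi>"
      "\<exists>f\<in>\<Pi>. bad I ar X R f"
      using not_reversible_imp_kappa_closed_bfs by blast
    then show "\<exists>\<Pi>. back_and_forth I ar X R X R \<Pi> \<and> bfs_kappa_closed (card_of X) \<Pi> \<and>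
        (\<exists>f\<in>\<Pi>. bad I ar X R f)"
      by blast
  qed (use not_reversible_if_bad_in_kappa_closed_bfs in blast)
  moreover have "\<not> reversible I ar X R \<longleftrightarrow>
      (\<exists>\<Pi>. back_and_forth I ar X R X R \<Pi> \<and> (\<exists>f\<in>\<Pi>. bad I ar X R f))" if "countable X"
  proof -
    have "bfs_kappa_closed (card_of X) \<Pi>" if "back_and_forth I ar X R X R \<Pi>" for \<Pi>
      using that bfs_kappa_closed_card_of_countable[OF \<open>countable X\<close>] unfolding back_and_forth_def by blast
    then show ?thesis
      using closed_iff by blast
  qed
  ultimately show ?thesis
    by blast
qed

end
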